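(* Let $n\ge 1$ and let $\Gamma$ be the equioriented quiver $1\to 2\to\cdots\to n$ of type $A_n$. For $1\le i\le j\le n$ and $1\le k\le \ell\le n$, we have $M[i,j]\le M[k,\ell]$ if and only if there exists an oriented (connected) path from the vertex of $M[k,\ell]$ to the vertex of $M[i,j]$ in the Auslander--Reiten quiver of $\Gamma$. In particular, a $\Gamma$-representation $M$ is catenoid if and only if the set of its pairwise non-isomorphic indecomposable direct summands is totally ordered with respect to $\le$.
   Context: Representations are finite-dimensional over $\mathbb{C}$. For $1\le i\le j\le n$, $M[i,j]$ denotes the indecomposable $\Gamma$-representation with $\mathbb{C}$ at the vertices $i,\dots,j$, zero elsewhere, and identity maps along arrows between vertices in $[i,j]$; every indecomposable is isomorphic to exactly one $M[i,j]$. The partial order $\le$ is defined by $M[i,j]\le M[k,\ell]$ iff $i\le k$ and $j\le \ell$. The Auslander--Reiten quiver of $\Gamma$ has vertices the pairs $(i,j)$, $1\le i\le j\le n$ (the vertex $(i,j)$ corresponding to $M[i,j]$), and arrows $(i,j)\to(i-1,j)$ and $(i,j)\to(i,j-1)$ whenever the target is a valid pair. A representation $M$ is called catenoid if all its distinct (pairwise non-isomorphic) indecomposable direct summands lie on a single oriented connected path of the Auslander--Reiten quiver. *)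

theory Defs
  imports Main "HOL-Library.Multiset"
begin

text \<open>Indecomposable representations of the equioriented A_n quiver are indexed by
  pairs (i,j) with 1 <= i <= j <= n (M[i,j]). A representation, up to isomorphism,
  is recorded (Krull-Schmidt) by the multiset of its indecomposable summands.\<close>

definition valid_pair :: "nat \<Rightarrow> nat \<times> nat \<Rightarrow> bool" where
  "valid_pair n v \<longleftrightarrow> 1 \<le> fst v \<and> fst v \<le> snd v \<and> snd v \<le> n"

definition ind_le :: "nat \<times> nat \<Rightarrow> nat \<times> nat \<Rightarrow> bool" where
  "ind_le v w \<longleftrightarrow> fst v \<le> fst w \<and> snd v \<le> snd w"

definition ar_arrow :: "nat \<Rightarrow> nat \<times> nat \<Rightarrow> nat \<times> nat \<Rightarrow> bool" where
  "ar_arrow n v w \<longleftrightarrow> valid_pair n v \<and> valid_pair n w \<and>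
     (w = (fst v - 1, snd v) \<or> w = (fst v, snd v - 1))"

definition ar_path :: "nat \<Rightarrow> (nat \<times> nat) list \<Rightarrow> bool" where
  "ar_path n p \<longleftrightarrow> p \<noteq> [] \<and> (\<forall>v\<in>set p. valid_pair n v) \<and>
     (\<forall>k. Suc k < length p \<longrightarrow> ar_arrow n (p ! k) (p ! Suc k))"

definition is_rep :: "nat \<Rightarrow> (nat \<times> nat) multiset \<Rightarrow> bool" where
  "is_rep n M \<longleftrightarrow> (\<forall>v\<in>#M. valid_pair n v)"

definition catenoid :: "nat \<Rightarrow> (nat \<times> nat) multiset \<Rightarrow> bool" where
  "catenoid n M \<longleftrightarrow> (\<exists>p. ar_path n p \<and> set_mset M \<subseteq> set p)"

definition totally_ordered_le :: "(nat \<times> nat) set \<Rightarrow> bool" where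
  "totally_ordered_le S \<longleftrightarrow> (\<forall>v\<in>S. \<forall>w\<in>S. ind_le v w \<or> ind_le w v)"

end

theory Submission
  imports Defs
begin

text \<open>Every arrow of the Auslander-Reiten quiver lowers exactly one coordinate by one, so
  oriented paths descend in the product order; conversely, between comparable pairs one can
  descend one coordinate at a time, staying inside the triangle of valid pairs. A catenoid
  representation is therefore totally ordered, and a finite chain is covered by concatenating
  descending paths between its consecutive elements.\<close>

lemma ind_le_refl: "ind_le v v"
  by (simp add: ind_le_def)

lemma ind_le_trans: "ind_le u v \<Longrightarrow> ind_le v w \<Longrightarrow> ind_le u w"
  by (auto simp: ind_le_def)

lemma ar_arrow_ind_le: "ar_arrow n v w \<Longrightarrow> ind_le w v"
  by (auto simp: ar_arrow_def ind_le_def)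

lemma ar_arrow_toward:
  assumes "valid_pair n v" "valid_pair n w" "ind_le w v" "w \<noteq> v"
  obtains u where "ar_arrow n v u" "ind_le w u"
proof (cases "fst w < fst v")
  case True
  then show ?thesis
    using assms that[of "(fst v - 1, snd v)"] by (auto simp: ar_arrow_def valid_pair_def ind_le_def)
next
  case False
  with assms have "fst w = fst v" "snd w < snd v"
    by (auto simp: ind_le_def prod_eq_iff)
  then show ?thesis
    using assms that[of "(fst v, snd v - 1)"] by (auto simp: ar_arrow_def valid_pair_def ind_le_def)
qed

lemma ar_path_iff_successively:
  "ar_path n p \<longleftrightarrow> p \<noteq> [] \<and> (\<forall>v\<in>set p. valid_pair n v) \<and> successively (ar_arrow n) p"
  by (simp add: ar_path_def successively_conv_nth)

lemma ar_path_Nil [simp]: "\<not> ar_path n []"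
  by (simp add: ar_path_iff_successively)

lemma ar_path_singleton [simp]: "ar_path n [v] \<longleftrightarrow> valid_pair n v"
  by (simp add: ar_path_iff_successively)

lemma ar_path_Cons_Cons [simp]:
  "ar_path n (v # w # p) \<longleftrightarrow> ar_arrow n v w \<and> ar_path n (w # p)"
  by (auto simp: ar_path_iff_successively ar_arrow_def)

lemma ar_path_sorted_wrt: "ar_path n p \<Longrightarrow> sorted_wrt (\<lambda>v w. ind_le w v) p"
  unfolding ar_path_iff_successively
  by (metis (mono_tags, lifting) ar_arrow_ind_le ind_le_trans successively_conv_sorted_wrt
      successively_mono transpI)

lemma ar_path_hd_greatest: "ar_path n p \<Longrightarrow> u \<in> set p \<Longrightarrow> ind_le u (hd p)"
  using ar_path_sorted_wrt[of n p] by (cases p) (auto simp: ind_le_refl)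

lemma ar_path_last_le_hd: "ar_path n p \<Longrightarrow> ind_le (last p) (hd p)"
  by (metis ar_path_Nil ar_path_hd_greatest last_in_set)

lemma totally_ordered_le_subset:
  "S \<subseteq> T \<Longrightarrow> totally_ordered_le T \<Longrightarrow> totally_ordered_le S"
  by (auto simp: totally_ordered_le_def)

lemma ar_path_chain: "ar_path n p \<Longrightarrow> totally_ordered_le (set p)"
proof -
  assume "ar_path n p"
  then have "sorted_wrt (\<lambda>v w. ind_le w v) p" by (rule ar_path_sorted_wrt)
  then show ?thesis
    by (induction p) (auto simp: totally_ordered_le_def ind_le_refl)
qed

lemma last_append_tl: "q \<noteq> [] \<Longrightarrow> last p = hd q \<Longrightarrow> last (p @ tl q) = last q"
  by (cases q) auto

lemma set_append_tl:
  "p \<noteq> [] \<Longrightarrow> q \<noteq> [] \<Longrightarrow> last p = hd q \<Longrightarrow> set (p @ tl q) = set p \<union> set q"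
  by (cases q) auto

lemma ar_path_append:
  "ar_path n p \<Longrightarrow> ar_path n q \<Longrightarrow> last p = hd q \<Longrightarrow> ar_path n (p @ tl q)"
  by (cases q) (auto simp: ar_path_iff_successively successively_append_iff successively_Cons)

lemma ar_path_descending:
  assumes "valid_pair n w" "valid_pair n v" "ind_le w v"
  shows "\<exists>p. ar_path n p \<and> hd p = v \<and> last p = w"
  using assms
proof (induction "fst v + snd v" arbitrary: v rule: less_induct)
  case less
  show ?case
  proof (cases "w = v")
    case True
    with less.prems show ?thesis by (intro exI[of _ "[v]"]) simp
  next
    case False
    then obtain u where u: "ar_arrow n v u" "ind_le w u"
      using ar_arrow_toward less.prems by blast
    then have "valid_pair n u" "fst u + snd u < fst v + snd v"
      by (auto simp: ar_arrow_def valid_pair_def)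
    then obtain p where "ar_path n p" "hd p = u" "last p = w"
      using less.hyps less.prems u(2) by blast
    with u(1) show ?thesis
      by (intro exI[of _ "v # p"]) (cases p, auto)
  qed
qed

lemma chain_has_least:
  assumes "finite S" "S \<noteq> {}" "totally_ordered_le S"
  obtains m where "m \<in> S" "\<forall>v\<in>S. ind_le m v"
proof -
  obtain m where m: "m \<in> S" "\<forall>v\<in>S. fst m + snd m \<le> fst v + snd v"
    using ex_is_arg_min_if_finite[OF assms(1,2), of "\<lambda>v. fst v + snd v"]
    by (auto simp: is_arg_min_linorder)
  have "ind_le m v" if "v \<in> S" for v
  proof -
    have "ind_le m v \<or> ind_le v m"
      using assms(3) m(1) that by (simp add: totally_ordered_le_def)
    moreover have "fst m + snd m \<le> fst v + snd v" using m(2) that by blast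
    ultimately show ?thesis by (auto simp: ind_le_def)
  qed
  with m(1) show ?thesis using that by blast
qed

text \<open>The path is built ending at the least element, so that the next (smaller) element
  can always be reached by appending a descending path.\<close>
lemma chain_on_ar_path:
  assumes "finite S" "S \<noteq> {}" "\<forall>v\<in>S. valid_pair n v" "totally_ordered_le S"
  shows "\<exists>p. ar_path n p \<and> S \<subseteq> set p \<and> last p \<in> S"
  using assms
proof (induction S rule: finite_psubset_induct)
  case (psubset S)
  obtain m where m: "m \<in> S" "\<forall>v\<in>S. ind_le m v"
    using chain_has_least psubset.hyps psubset.prems by blast
  show ?case
  proof (cases "S = {m}")
    case True
    with psubset.prems show ?thesis by (intro exI[of _ "[m]"]) auto
  next
    case False
    then obtain p where p: "ar_path n p" "S - {m} \<subseteq> set p" "last p \<in> S - {m}"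
      using psubset.IH[of "S - {m}"] psubset.prems m(1)
      by (auto simp: totally_ordered_le_def)
    obtain q where q: "ar_path n q" "hd q = last p" "last q = m"
      using ar_path_descending psubset.prems(2) p(3) m by blast
    have "p \<noteq> []" "q \<noteq> []" using p(1) q(1) by auto
    then have "last (p @ tl q) = m" "set (p @ tl q) = set p \<union> set q" "m \<in> set q"
      using last_append_tl[of q p] set_append_tl[of p q] q last_in_set[of q] by simp_all
    with p(2) m(1) show ?thesis
      using ar_path_append[OF p(1) q(1) q(2)[symmetric]] by (intro exI[of _ "p @ tl q"]) auto
  qed
qed

lemma ind_le_iff_ar_path:
  assumes "valid_pair n w" "valid_pair n v"
  shows "ind_le w v \<longleftrightarrow> (\<exists>p. ar_path n p \<and> hd p = v \<and> last p = w)"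
  using ar_path_descending[OF assms] ar_path_last_le_hd by metis

lemma catenoid_iff_totally_ordered_le:
  assumes "1 \<le> n" "is_rep n M"
  shows "catenoid n M \<longleftrightarrow> totally_ordered_le (set_mset M)"
proof
  assume "catenoid n M"
  then obtain p where "ar_path n p" "set_mset M \<subseteq> set p"
    unfolding catenoid_def by blast
  then show "totally_ordered_le (set_mset M)"
    using ar_path_chain totally_ordered_le_subset by blast
next
  assume chain: "totally_ordered_le (set_mset M)"
  show "catenoid n M"
  proof (cases "M = {#}")
    case True
    have "ar_path n [(1, 1)]" using assms(1) by (simp add: valid_pair_def)
    with True show ?thesis unfolding catenoid_def by (metis empty_subsetI set_mset_empty)
  next
    case False
    with assms(2) chain show ?thesis
      using chain_on_ar_path[of "set_mset M" n] unfolding catenoid_def is_rep_def by auto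
  qed
qed

theorem lemma1p2:
  fixes n :: nat
  assumes "1 \<le> n"
  shows "(\<forall>i j k l. valid_pair n (i, j) \<longrightarrow> valid_pair n (k, l) \<longrightarrow>
            (ind_le (i, j) (k, l) \<longleftrightarrow>
             (\<exists>p. ar_path n p \<and> hd p = (k, l) \<and> last p = (i, j))))
       \<and> (\<forall>M. is_rep n M \<longrightarrow> (catenoid n M \<longleftrightarrow> totally_ordered_le (set_mset M)))"
  using ind_le_iff_ar_path catenoid_iff_totally_ordered_le[OF assms] by blast

end
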